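(* Let $p,q\geq 2$ be relatively prime integers and $x,y,a\in A_{pq}$. Then $g_{p,q}(x,a)\equiv g_{p,q}(y,a)\pmod q$ if and only if $x\equiv y\pmod q$.
   Context: For an integer $n>1$, $A_n=\{0,1,\dots,n-1\}$. Define $g_{p,q}:A_{pq}\times A_{pq}\to A_{pq}$ by writing $x=x_1q+x_0$, $y=y_1q+y_0$ with $x_0,y_0\in A_q$, $x_1,y_1\in A_p$ (uniquely), and setting $g_{p,q}(x,y)=x_0p+y_1$. *)

theory Defs
  imports Main
begin

text \<open>g_{p,q} on A_{pq} = {0..<p*q}: write x = x1*q + x0, y = y1*q + y0 with
  x0,y0 < q and x1,y1 < p; then g(x,y) = x0*p + y1.\<close>
definition g :: "nat \<Rightarrow> nat \<Rightarrow> nat \<Rightarrow> nat \<Rightarrow> nat" where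
  "g p q x y = (x mod q) * p + y div q"

end

theory Submission
  imports Defs "HOL-Number_Theory.Cong"
begin

text \<open>Modulo \<open>q\<close> the value \<open>g p q x a\<close> is the affine map \<open>x \<mapsto> x * p + a div q\<close>,
  which is injective on residues because \<open>p\<close> is a unit modulo \<open>q\<close>.\<close>

lemma affine_mod_eq_iff_coprime:
  fixes p q u v c :: nat
  assumes "coprime p q"
  shows "(u * p + c) mod q = (v * p + c) mod q \<longleftrightarrow> u mod q = v mod q"
proof -
  have "(u * p + c) mod q = (v * p + c) mod q \<longleftrightarrow> [u * p = v * p] (mod q)"
    by (simp add: cong_def [symmetric] cong_add_rcancel_nat)
  also have "\<dots> \<longleftrightarrow> [u = v] (mod q)"
    using assms by (simp add: cong_mult_rcancel_nat coprime_commute)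
  finally show ?thesis
    by (simp add: cong_def)
qed

theorem lemma3:
  fixes p q x y a :: nat
  assumes "p \<ge> 2" and "q \<ge> 2" and "coprime p q"
    and "x < p * q" and "y < p * q" and "a < p * q"
  shows "g p q x a mod q = g p q y a mod q \<longleftrightarrow> x mod q = y mod q"
  using affine_mod_eq_iff_coprime [OF \<open>coprime p q\<close>, of "x mod q" "a div q" "y mod q"]
  by (simp add: g_def)

end
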